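(* Let $\Sigma$ be a finite simplicial complex, let $d\ge0$, and suppose $\deg\tau>0$ for all $\tau\in\Sigma_d$. Then for every $p\ge1$, $$\frac{h(\Sigma_d)^p}{|\Sigma_{d+1}|^{p-1}}\le\lambda_{I_d}(\Delta^{up}_{d,p})\le\mathrm{vol}(\Sigma_d)^{p-1}\,h(\Sigma_d).$$
   Context: $B_{d+1}$ is the signed $\Sigma_d\times\Sigma_{d+1}$ incidence matrix of $\Sigma$, with entries $\mathrm{sgn}([\tau],\partial[\sigma])$ for $\tau\subset\sigma$ and $0$ otherwise. For $d\ge1$, $B_d$ is the analogous $\Sigma_{d-1}\times\Sigma_d$ matrix; for $d=0$, $B_0^\top:\mathbb{R}\to\mathbb{R}^{\Sigma_0}$ maps to the constant functions. $\deg\tau$ is the number of $(d+1)$-simplices containing $\tau$, and $\mathrm{vol}(\Sigma_d)=\sum_\tau\deg\tau$. We write $\|\mathbf{x}\|_{p,\deg}^p=\sum_\tau\deg\tau\,|x_\tau|^p$, and $I_d=\mathrm{rank}(B_d)+1$. The first nontrivial eigenvalue of the normalized up $p$-Laplacian is $$\lambda_{I_d}(\Delta^{up}_{d,p})=\min_{\mathbf{x}\ne0,\ \mathbf{x}\perp\mathrm{Im}(B_d^\top)}\frac{\|B_{d+1}^\top\mathbf{x}\|_p^p}{\min_{\mathbf{y}\in\mathrm{Im}(B_d^\top)}\|\mathbf{x}+\mathbf{y}\|_{p,\deg}^p},$$ where $\perp$ is standard Euclidean orthogonality. The Cheeger constant is $$h(\Sigma_d)=\inf_{\mathbf{x}\notin\mathrm{Im}(B_d^\top)}\frac{\|B_{d+1}^\top\mathbf{x}\|_1}{\inf_{\mathbf{z}\in\mathrm{Im}(B_d^\top)}\|\mathbf{x}+\mathbf{z}\|_{1,\deg}}.$$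 *)

theory Defs
  imports Complex_Main
begin

text \<open>A finite (abstract) simplicial complex on a linearly ordered vertex type:
  a finite family of nonempty finite vertex sets closed under nonempty subsets.
  Simplices are oriented by the vertex order.\<close>

definition simplicial_complex :: "'v::linorder set set \<Rightarrow> bool" where
  "simplicial_complex K \<longleftrightarrow> finite K \<and> (\<forall>\<sigma>\<in>K. finite \<sigma> \<and> \<sigma> \<noteq> {}) \<and>
     (\<forall>\<sigma>\<in>K. \<forall>\<tau>. \<tau> \<subseteq> \<sigma> \<and> \<tau> \<noteq> {} \<longrightarrow> \<tau> \<in> K)"

definition faces :: "'v::linorder set set \<Rightarrow> nat \<Rightarrow> 'v set set" where
  "faces K d = {\<sigma>\<in>K. card \<sigma> = d + 1}"

text \<open>sgn([\<tau>], \<partial>[\<sigma>]): for \<sigma> = {v_0 < ... < v_k} and \<tau> = \<sigma> - {v_i}, this is (-1)^i;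
  zero if \<tau> is not a facet of \<sigma>.\<close>
definition inc_sign :: "'v::linorder set \<Rightarrow> 'v set \<Rightarrow> real" where
  "inc_sign \<tau> \<sigma> = (if \<tau> \<subseteq> \<sigma> \<and> card \<sigma> = card \<tau> + 1
      then (-1) ^ card {v\<in>\<sigma>. v < the_elem (\<sigma> - \<tau>)} else 0)"

definition cochains :: "'v::linorder set set \<Rightarrow> nat \<Rightarrow> ('v set \<Rightarrow> real) set" where
  "cochains K d = {x. \<forall>\<tau>. \<tau> \<notin> faces K d \<longrightarrow> x \<tau> = 0}"

definition coboundary :: "'v::linorder set set \<Rightarrow> nat \<Rightarrow> ('v set \<Rightarrow> real) \<Rightarrow> ('v set \<Rightarrow> real)" where
  "coboundary K d x = (\<lambda>\<sigma>. if \<sigma> \<in> faces K (d+1)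
       then (\<Sum>\<tau>\<in>faces K d. inc_sign \<tau> \<sigma> * x \<tau>) else 0)"

definition im_BdT :: "'v::linorder set set \<Rightarrow> nat \<Rightarrow> ('v set \<Rightarrow> real) set" where
  "im_BdT K d = (if d = 0
      then {(\<lambda>\<tau>. if \<tau> \<in> faces K 0 then c else 0) | c. True}
      else {coboundary K (d - 1) y | y. y \<in> cochains K (d - 1)})"

definition deg :: "'v::linorder set set \<Rightarrow> nat \<Rightarrow> 'v set \<Rightarrow> nat" where
  "deg K d \<tau> = card {\<sigma>\<in>faces K (d+1). \<tau> \<subseteq> \<sigma>}"

definition vol :: "'v::linorder set set \<Rightarrow> nat \<Rightarrow> real" where
  "vol K d = (\<Sum>\<tau>\<in>faces K d. real (deg K d \<tau>))"

definition pnorm_pow :: "'v::linorder set set \<Rightarrow> nat \<Rightarrow> real \<Rightarrow> ('v set \<Rightarrow> real) \<Rightarrow> real" where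
  "pnorm_pow K k p x = (\<Sum>\<sigma>\<in>faces K k. \<bar>x \<sigma>\<bar> powr p)"

definition pnorm_deg_pow :: "'v::linorder set set \<Rightarrow> nat \<Rightarrow> real \<Rightarrow> ('v set \<Rightarrow> real) \<Rightarrow> real" where
  "pnorm_deg_pow K d p x = (\<Sum>\<tau>\<in>faces K d. real (deg K d \<tau>) * \<bar>x \<tau>\<bar> powr p)"

definition orth_im :: "'v::linorder set set \<Rightarrow> nat \<Rightarrow> ('v set \<Rightarrow> real) \<Rightarrow> bool" where
  "orth_im K d x \<longleftrightarrow> (\<forall>y\<in>im_BdT K d. (\<Sum>\<tau>\<in>faces K d. x \<tau> * y \<tau>) = 0)"

definition quot_norm_pow :: "'v::linorder set set \<Rightarrow> nat \<Rightarrow> real \<Rightarrow> ('v set \<Rightarrow> real) \<Rightarrow> real" where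
  "quot_norm_pow K d p x = Inf {pnorm_deg_pow K d p (\<lambda>\<tau>. x \<tau> + y \<tau>) | y. y \<in> im_BdT K d}"

text \<open>\<lambda>_{I_d}(\<Delta>^{up}_{d,p}), via the variational formula.\<close>
definition lambda_up :: "'v::linorder set set \<Rightarrow> nat \<Rightarrow> real \<Rightarrow> real" where
  "lambda_up K d p = Inf {pnorm_pow K (d+1) p (coboundary K d x) / quot_norm_pow K d p x
      | x. x \<in> cochains K d \<and> (\<exists>\<tau>\<in>faces K d. x \<tau> \<noteq> 0) \<and> orth_im K d x}"

definition cheeger :: "'v::linorder set set \<Rightarrow> nat \<Rightarrow> real" where
  "cheeger K d = Inf {pnorm_pow K (d+1) 1 (coboundary K d x) / quot_norm_pow K d 1 x
      | x. x \<in> cochains K d \<and> x \<notin> im_BdT K d}"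

end

(* Both bounds come from comparing, for one cochain x, the Rayleigh quotient with exponent p and the
   one with exponent 1 (the Cheeger quotient). On the numerator side the power-mean inequality gives
   |x|_1^p <= |Sigma_{d+1}|^(p-1) |x|_p^p, and superadditivity of t^p gives |x|_p^p <= |x|_1^p; the same
   two inequalities hold for the deg-weighted norms (with vol(Sigma_d) in place of |Sigma_{d+1}|, and
   using deg >= 1) and pass to the infimum over Im(B_d^T). For the upper bound one also needs that the
   Cheeger quotient is at most 1, since every entry of B_{d+1} has modulus at most 1 and column tau has
   deg tau nonzero entries. Finally, B_{d+1}^T B_d^T = 0, so both quotients are invariant under adding
   elements of Im(B_d^T), and every class modulo Im(B_d^T) has a representative orthogonal to it; hence
   the two infima range over the same classes. *)

theory Submission
  imports Defs "HOL-Analysis.Derivative"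
begin

section \<open>Power means\<close>

lemma powr_above_tangent:
  fixes s t p :: real
  assumes "p \<ge> 1" "s > 0" "t \<ge> 0"
  shows "s powr p + p * s powr (p - 1) * (t - s) \<le> t powr p"
proof (cases "t = 0")
  case True
  have "s powr p = s * s powr (p - 1)" using assms by (simp add: powr_mult_base)
  then have "s powr p + p * s powr (p - 1) * (t - s) = (1 - p) * s powr p"
    using True by (simp add: algebra_simps)
  also have "\<dots> \<le> 0" using assms by (simp add: mult_nonpos_nonneg)
  finally show ?thesis using True by simp
next
  case False
  have "p * s powr (p - 1) * (t - s) \<le> t powr p - s powr p"
    using assms False
    by (intro convex_on_imp_above_tangent[where A = "{0<..}", OF powr_convex[OF assms(1)]])
       (auto intro!: derivative_eq_intros simp: interior_open)
  then show ?thesis by simp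
qed

lemma powr_sum_le_sum_powr:
  fixes w a :: "'a \<Rightarrow> real" and p :: real
  assumes "finite A" "p \<ge> 1" "\<And>i. i \<in> A \<Longrightarrow> w i \<ge> 0" "\<And>i. i \<in> A \<Longrightarrow> a i \<ge> 0"
    and "(\<Sum>i\<in>A. w i) > 0"
  shows "(\<Sum>i\<in>A. w i * a i) powr p \<le> (\<Sum>i\<in>A. w i) powr (p - 1) * (\<Sum>i\<in>A. w i * a i powr p)"
proof -
  define S where "S = (\<Sum>i\<in>A. w i * a i)"
  define W where "W = (\<Sum>i\<in>A. w i)"
  have "S \<ge> 0" unfolding S_def using assms by (intro sum_nonneg) auto
  have "W > 0" using assms(5) W_def by simp
  show ?thesis
  proof (cases "S = 0")
    case True
    have "0 \<le> W powr (p - 1) * (\<Sum>i\<in>A. w i * a i powr p)"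
      using assms by (intro mult_nonneg_nonneg sum_nonneg) auto
    then show ?thesis using True unfolding S_def W_def by simp
  next
    case False
    define m where "m = S / W"
    have "m > 0" using \<open>S \<ge> 0\<close> False \<open>W > 0\<close> unfolding m_def by simp
    \<comment> \<open>Sum the tangent inequality at the weighted mean m; the linear terms cancel.\<close>
    have "(\<Sum>i\<in>A. w i * (m powr p + p * m powr (p - 1) * (a i - m))) \<le> (\<Sum>i\<in>A. w i * a i powr p)"
      using assms \<open>m > 0\<close> by (intro sum_mono mult_left_mono powr_above_tangent) auto
    moreover have "(\<Sum>i\<in>A. w i * (m powr p + p * m powr (p - 1) * (a i - m)))
        = W * m powr p + p * m powr (p - 1) * (S - W * m)"
      unfolding S_def W_def
      by (simp add: algebra_simps sum.distrib sum_distrib_left sum_subtractf sum_distrib_right)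
    moreover have "S - W * m = 0" using \<open>W > 0\<close> unfolding m_def by simp
    moreover have "W * m powr p = S powr p / W powr (p - 1)"
      using \<open>W > 0\<close> \<open>S \<ge> 0\<close> unfolding m_def
      by (simp add: powr_divide powr_diff field_simps)
    ultimately have "S powr p / W powr (p - 1) \<le> (\<Sum>i\<in>A. w i * a i powr p)" by simp
    then show ?thesis using \<open>W > 0\<close> unfolding S_def[symmetric] W_def[symmetric]
      by (simp add: divide_le_eq mult.commute)
  qed
qed

lemma sum_powr_le_powr_sum:
  fixes w a :: "'a \<Rightarrow> real" and p :: real
  assumes "finite A" "p \<ge> 1" "\<And>i. i \<in> A \<Longrightarrow> w i \<ge> 1" "\<And>i. i \<in> A \<Longrightarrow> a i \<ge> 0"
  shows "(\<Sum>i\<in>A. w i * a i powr p) \<le> (\<Sum>i\<in>A. w i * a i) powr p"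
proof -
  define S where "S = (\<Sum>i\<in>A. w i * a i)"
  have term_nonneg: "0 \<le> w i * a i" if "i \<in> A" for i
    using assms(3,4)[OF that] by simp
  have "S \<ge> 0" unfolding S_def using term_nonneg by (simp add: sum_nonneg)
  have a_le_S: "a i \<le> S" if "i \<in> A" for i
  proof -
    have "a i \<le> w i * a i" using assms(3,4)[OF that] mult_right_mono[of 1 "w i" "a i"] by simp
    also have "\<dots> \<le> S" unfolding S_def using assms(1) that term_nonneg by (intro member_le_sum) auto
    finally show ?thesis .
  qed
  have "(\<Sum>i\<in>A. w i * a i powr p) \<le> (\<Sum>i\<in>A. w i * a i * S powr (p - 1))"
  proof (intro sum_mono)
    fix i assume i: "i \<in> A"
    have "a i powr p = a i * a i powr (p - 1)"
      using assms(4)[OF i] by (cases "a i = 0") (simp_all add: powr_mult_base)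
    also have "\<dots> \<le> a i * S powr (p - 1)"
      using assms(2,4) a_le_S i by (intro mult_left_mono powr_mono2) auto
    finally show "w i * a i powr p \<le> w i * a i * S powr (p - 1)"
      using assms(3)[OF i] by (simp add: mult.assoc mult_left_mono)
  qed
  also have "\<dots> = S * S powr (p - 1)" unfolding S_def by (simp add: sum_distrib_right)
  also have "\<dots> = S powr p"
    using \<open>S \<ge> 0\<close> by (cases "S = 0") (simp_all add: powr_mult_base)
  finally show ?thesis unfolding S_def .
qed

lemma powr_le_self:
  fixes x p :: real
  assumes "0 \<le> x" "x \<le> 1" "1 \<le> p"
  shows "x powr p \<le> x"
  using assms powr_le_one_le[of x p] by (cases "x = 0") auto

section \<open>Orthogonal projection onto a finite span\<close>

lemma sum_residual_mult_eq_0: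
  fixes u v :: "'a \<Rightarrow> real"
  assumes "finite A"
  shows "(\<Sum>t\<in>A. (u t - (\<Sum>s\<in>A. u s * v s) / (\<Sum>s\<in>A. v s * v s) * v t) * v t) = 0"
proof (cases "(\<Sum>s\<in>A. v s * v s) = 0")
  case True
  then have "\<forall>t\<in>A. v t = 0" using assms by (simp add: sum_nonneg_eq_0_iff)
  then show ?thesis by simp
next
  case False
  then show ?thesis
    by (simp add: left_diff_distrib sum_subtractf mult.assoc flip: sum_distrib_left sum_divide_distrib)
qed

lemma orthogonal_combination_exists:
  fixes g :: "'i \<Rightarrow> 'a \<Rightarrow> real" and x :: "'a \<Rightarrow> real"
  assumes "finite I" "finite A"
  shows "\<exists>c. \<forall>j\<in>I. (\<Sum>t\<in>A. (x t + (\<Sum>i\<in>I. c i * g i t)) * g j t) = 0"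
  using assms(1)
proof (induction I arbitrary: x rule: finite_induct)
  case empty
  then show ?case by simp
next
  case (insert j I)
  define ip :: "('a \<Rightarrow> real) \<Rightarrow> ('a \<Rightarrow> real) \<Rightarrow> real" where "ip = (\<lambda>u v. \<Sum>t\<in>A. u t * v t)"
  have ip_diff: "ip (\<lambda>t. u t - a * v t) w = ip u w - a * ip v w" for u v w a
    unfolding ip_def by (simp add: algebra_simps sum_subtractf sum_distrib_left)
  have ip_comb: "ip u (\<lambda>t. \<Sum>i\<in>I. c i * g i t) = (\<Sum>i\<in>I. c i * ip u (g i))" for u c
    unfolding ip_def by (simp add: sum_distrib_left sum.swap[of _ A] algebra_simps)
  \<comment> \<open>Orthogonalise both x and g j against the span of the g i, i \<in> I, then take the
    component of x' along g'.\<close>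
  obtain cg where cg: "\<forall>i\<in>I. ip (\<lambda>t. g j t + (\<Sum>i\<in>I. cg i * g i t)) (g i) = 0"
    using insert.IH[of "g j"] unfolding ip_def by blast
  obtain cx where cx: "\<forall>i\<in>I. ip (\<lambda>t. x t + (\<Sum>i\<in>I. cx i * g i t)) (g i) = 0"
    using insert.IH[of x] unfolding ip_def by blast
  define g' where "g' = (\<lambda>t. g j t + (\<Sum>i\<in>I. cg i * g i t))"
  define x' where "x' = (\<lambda>t. x t + (\<Sum>i\<in>I. cx i * g i t))"
  define a where "a = ip x' g' / ip g' g'"
  define r where "r = (\<lambda>t. x' t - a * g' t)"
  define c where "c = (\<lambda>i. if i = j then - a else cx i - a * cg i)"
  have r_eq: "x t + (\<Sum>i\<in>insert j I. c i * g i t) = r t" for t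
  proof -
    have "(\<Sum>i\<in>I. c i * g i t) = (\<Sum>i\<in>I. cx i * g i t - a * (cg i * g i t))"
      unfolding c_def using insert.hyps(2) by (intro sum.cong) (auto simp: algebra_simps)
    then show ?thesis using insert.hyps unfolding r_def x'_def g'_def c_def
      by (simp add: sum_subtractf sum_distrib_left algebra_simps)
  qed
  have orth_I: "ip r (g i) = 0" if "i \<in> I" for i
    unfolding r_def ip_diff using cx cg that unfolding x'_def g'_def by simp
  have orth_g': "ip r g' = 0"
    unfolding r_def a_def ip_def by (rule sum_residual_mult_eq_0[OF assms(2)])
  have "g j t = g' t - (\<Sum>i\<in>I. cg i * g i t)" for t unfolding g'_def by simp
  then have "ip r (g j) = ip r g' - ip r (\<lambda>t. \<Sum>i\<in>I. cg i * g i t)"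
    unfolding ip_def by (simp add: right_diff_distrib sum_subtractf)
  also have "\<dots> = ip r g' - (\<Sum>i\<in>I. cg i * ip r (g i))" by (simp only: ip_comb)
  finally have "ip r (g j) = ip r g' - (\<Sum>i\<in>I. cg i * ip r (g i))" .
  then have orth_j: "ip r (g j) = 0" using orth_g' orth_I by simp
  show ?case
    using orth_I orth_j unfolding ip_def by (intro exI[of _ c]) (simp add: r_eq)
qed

section \<open>Incidence signs\<close>

lemma finite_face: "\<sigma> \<in> faces K k \<Longrightarrow> finite \<sigma>"
  unfolding faces_def by (auto intro: card_ge_0_finite)

lemma inc_sign_nonzeroD: "inc_sign \<tau> \<sigma> \<noteq> 0 \<Longrightarrow> \<tau> \<subseteq> \<sigma> \<and> card \<sigma> = card \<tau> + 1"
  unfolding inc_sign_def by (auto split: if_splits)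

lemma inc_sign_Diff_singleton:
  assumes "finite \<sigma>" "b \<in> \<sigma>"
  shows "inc_sign (\<sigma> - {b}) \<sigma> = (-1) ^ card {v\<in>\<sigma>. v < b}"
proof -
  have "\<sigma> - (\<sigma> - {b}) = {b}" using assms by auto
  moreover have "card \<sigma> > 0" using assms by (auto simp: card_gt_0_iff)
  then have "card \<sigma> = card (\<sigma> - {b}) + 1" using assms by (simp add: card_Diff_singleton)
  ultimately show ?thesis unfolding inc_sign_def by auto
qed

text \<open>The two ways of removing the vertices a < b from \<sigma> carry opposite signs, because
  removing a first shifts the position of b down by one.\<close>
lemma inc_sign_square_cancel:
  assumes "finite \<sigma>" "a \<in> \<sigma>" "b \<in> \<sigma>" "a < b"
  shows "inc_sign (\<sigma> - {a}) \<sigma> * inc_sign (\<sigma> - {a, b}) (\<sigma> - {a})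
       + inc_sign (\<sigma> - {b}) \<sigma> * inc_sign (\<sigma> - {a, b}) (\<sigma> - {b}) = 0"
proof -
  define B where "B = card {v\<in>\<sigma>. v < b}"
  have "\<sigma> - {a, b} = (\<sigma> - {a}) - {b}" "\<sigma> - {a, b} = (\<sigma> - {b}) - {a}" by auto
  then have ab: "inc_sign (\<sigma> - {a, b}) (\<sigma> - {a}) = (-1) ^ card {v\<in>\<sigma> - {a}. v < b}"
    and ba: "inc_sign (\<sigma> - {a, b}) (\<sigma> - {b}) = (-1) ^ card {v\<in>\<sigma> - {b}. v < a}"
    using assms inc_sign_Diff_singleton[of "\<sigma> - {a}" b] inc_sign_Diff_singleton[of "\<sigma> - {b}" a]
    by auto
  have "{v\<in>\<sigma> - {a}. v < b} = {v\<in>\<sigma>. v < b} - {a}" by auto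
  then have "card {v\<in>\<sigma> - {a}. v < b} = B - 1"
    unfolding B_def using assms by (simp add: card_Diff_singleton)
  moreover have "{v\<in>\<sigma> - {b}. v < a} = {v\<in>\<sigma>. v < a}" using assms by auto
  moreover have "B > 0" unfolding B_def using assms by (auto simp: card_gt_0_iff)
  ultimately show ?thesis
    using ab ba inc_sign_Diff_singleton[OF assms(1,2)] inc_sign_Diff_singleton[OF assms(1,3)]
    unfolding B_def[symmetric] by (cases B) (simp_all add: power_add[symmetric] add.commute)
qed

lemma exists_coface_if_deg_pos: "deg K d \<tau> > 0 \<Longrightarrow> \<exists>\<sigma>\<in>faces K (d + 1). \<tau> \<subseteq> \<sigma>"
  unfolding deg_def by (auto simp: card_gt_0_iff)

lemma faces_Suc_nonempty:
  assumes "faces K d \<noteq> {}" "\<forall>\<tau>\<in>faces K d. deg K d \<tau> > 0"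
  shows "faces K (d + 1) \<noteq> {}"
  using assms exists_coface_if_deg_pos by blast

section \<open>The image of the lower coboundary\<close>

context
  fixes K :: "'v::linorder set set"
  assumes sc: "simplicial_complex K"
begin

lemma finite_faces: "finite (faces K k)"
  using sc unfolding simplicial_complex_def faces_def by auto

lemma Diff_singleton_in_faces:
  assumes "\<sigma> \<in> faces K (d + 1)" "v \<in> \<sigma>"
  shows "\<sigma> - {v} \<in> faces K d"
proof -
  have "card (\<sigma> - {v}) = d + 1"
    using assms finite_face[OF assms(1)] unfolding faces_def by simp
  moreover have "\<sigma> - {v} \<in> K"
    using sc assms(1) \<open>card (\<sigma> - {v}) = d + 1\<close> unfolding simplicial_complex_def faces_def
    by (metis Diff_subset card.empty add_is_0 one_neq_zero mem_Collect_eq)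
  ultimately show ?thesis unfolding faces_def by simp
qed

lemma sum_inc_sign_inc_sign_eq_0:
  assumes \<sigma>: "\<sigma> \<in> faces K (d + 1)" and "card \<rho> = d"
  shows "(\<Sum>\<tau>\<in>faces K d. inc_sign \<tau> \<sigma> * inc_sign \<rho> \<tau>) = 0"
proof (cases "\<rho> \<subseteq> \<sigma>")
  case False
  then show ?thesis
    by (intro sum.neutral ballI) (metis inc_sign_nonzeroD mult_eq_0_iff subset_trans)
next
  case True
  have "finite \<sigma>" using finite_face \<sigma> by blast
  moreover have "card \<sigma> = d + 2" using \<sigma> unfolding faces_def by auto
  ultimately have "card (\<sigma> - \<rho>) = 2"
    using True \<open>card \<rho> = d\<close> by (simp add: card_Diff_subset finite_subset)
  then obtain a b where ab: "\<sigma> - \<rho> = {a, b}" "a < b"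
    by (auto simp: card_2_iff) (metis insert_commute linorder_neqE)
  then have "a \<in> \<sigma>" "b \<in> \<sigma>" "\<rho> = \<sigma> - {a, b}" using True by auto
  have "\<sigma> - {a} \<noteq> \<sigma> - {b}" using \<open>b \<in> \<sigma>\<close> ab(2) by auto
  have only_two: "\<tau> \<in> {\<sigma> - {a}, \<sigma> - {b}}" if "inc_sign \<tau> \<sigma> * inc_sign \<rho> \<tau> \<noteq> 0" for \<tau>
  proof -
    from that have \<tau>: "\<tau> \<subseteq> \<sigma>" "card \<sigma> = card \<tau> + 1" "\<rho> \<subseteq> \<tau>"
      using inc_sign_nonzeroD by auto
    then have "card (\<sigma> - \<tau>) = 1"
      using \<open>finite \<sigma>\<close> by (simp add: card_Diff_subset finite_subset)
    then obtain c where "\<sigma> - \<tau> = {c}" by (auto simp: card_1_singleton_iff)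
    with \<tau> ab have "c \<in> {a, b}" "\<tau> = \<sigma> - {c}" by auto
    then show ?thesis by auto
  qed
  have "(\<Sum>\<tau>\<in>faces K d. inc_sign \<tau> \<sigma> * inc_sign \<rho> \<tau>)
      = (\<Sum>\<tau>\<in>{\<sigma> - {a}, \<sigma> - {b}}. inc_sign \<tau> \<sigma> * inc_sign \<rho> \<tau>)"
    using only_two Diff_singleton_in_faces[OF \<sigma>] \<open>a \<in> \<sigma>\<close> \<open>b \<in> \<sigma>\<close>
    by (intro sum.mono_neutral_right finite_faces) auto
  also have "\<dots> = 0"
    using inc_sign_square_cancel[OF \<open>finite \<sigma>\<close> \<open>a \<in> \<sigma>\<close> \<open>b \<in> \<sigma>\<close> ab(2)]
      \<open>\<sigma> - {a} \<noteq> \<sigma> - {b}\<close> \<open>\<rho> = \<sigma> - {a, b}\<close> by simp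
  finally show ?thesis .
qed

lemma coboundary_im_BdT_eq_0:
  assumes y: "y \<in> im_BdT K d"
  shows "coboundary K d y \<sigma> = 0"
proof (cases "\<sigma> \<in> faces K (d + 1)")
  case False
  then show ?thesis unfolding coboundary_def by simp
next
  case \<sigma>: True
  show ?thesis
  proof (cases d)
    case 0
    then obtain c where y_const: "y = (\<lambda>\<tau>. if \<tau> \<in> faces K 0 then c else 0)"
      using y unfolding im_BdT_def by auto
    \<comment> \<open>For d = 0, the constants are the coboundary of the empty simplex.\<close>
    have empty_sign: "inc_sign {} \<tau> = 1" if \<tau>: "\<tau> \<in> faces K 0" for \<tau>
    proof -
      obtain v where "\<tau> = {v}" using \<tau> unfolding faces_def by (auto simp: card_1_singleton_iff)
      then show ?thesis unfolding inc_sign_def by (simp add: Collect_conj_eq)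
    qed
    have "coboundary K d y \<sigma> = c * (\<Sum>\<tau>\<in>faces K 0. inc_sign \<tau> \<sigma> * inc_sign {} \<tau>)"
      unfolding coboundary_def using \<sigma> 0 y_const empty_sign
      by (simp add: sum_distrib_left mult.commute)
    then show ?thesis using sum_inc_sign_inc_sign_eq_0[of \<sigma> 0 "{}"] \<sigma> 0 by simp
  next
    case (Suc d')
    then obtain z where z: "y = coboundary K d' z" using y unfolding im_BdT_def by auto
    have "coboundary K d y \<sigma>
        = (\<Sum>\<tau>\<in>faces K d. inc_sign \<tau> \<sigma> * (\<Sum>\<rho>\<in>faces K d'. inc_sign \<rho> \<tau> * z \<rho>))"
      unfolding coboundary_def z using \<sigma> Suc by simp
    also have "\<dots> = (\<Sum>\<rho>\<in>faces K d'. z \<rho> * (\<Sum>\<tau>\<in>faces K d. inc_sign \<tau> \<sigma> * inc_sign \<rho> \<tau>))"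
      by (simp add: sum_distrib_left sum.swap[of _ "faces K d"] algebra_simps)
    also have "\<dots> = 0"
      using sum_inc_sign_inc_sign_eq_0[OF \<sigma>] Suc by (intro sum.neutral) (auto simp: faces_def)
    finally show ?thesis .
  qed
qed

lemma coboundary_add_im_BdT:
  assumes "y \<in> im_BdT K d"
  shows "coboundary K d (\<lambda>t. x t + y t) = coboundary K d x"
proof
  fix \<sigma>
  have "coboundary K d (\<lambda>t. x t + y t) \<sigma> = coboundary K d x \<sigma> + coboundary K d y \<sigma>"
    unfolding coboundary_def by (simp add: distrib_left sum.distrib)
  then show "coboundary K d (\<lambda>t. x t + y t) \<sigma> = coboundary K d x \<sigma>"
    using coboundary_im_BdT_eq_0[OF assms] by simp
qed

text \<open>Im(B_d^T) is spanned by finitely many cochains: the constant cochain on \<Sigma>_0 when d = 0,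
  and the coboundaries of the indicator cochains of the (d-1)-faces otherwise.\<close>
lemma im_BdT_finite_span:
  obtains I :: "'v set set" and g
  where "finite I" "\<And>i \<sigma>. \<sigma> \<notin> faces K d \<Longrightarrow> g i \<sigma> = 0"
    "im_BdT K d = range (\<lambda>c \<sigma>. \<Sum>i\<in>I. c i * g i \<sigma>)"
proof (cases d)
  case 0
  define g :: "'v set \<Rightarrow> 'v set \<Rightarrow> real" where "g = (\<lambda>_ \<sigma>. if \<sigma> \<in> faces K 0 then 1 else 0)"
  have "im_BdT K d = range (\<lambda>c \<sigma>. \<Sum>i\<in>{{}}. c i * g i \<sigma>)"
  proof (intro set_eqI iffI)
    fix f assume "f \<in> im_BdT K d"
    then obtain a where "f = (\<lambda>\<tau>. if \<tau> \<in> faces K 0 then a else 0)"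
      using 0 unfolding im_BdT_def by auto
    then show "f \<in> range (\<lambda>c \<sigma>. \<Sum>i\<in>{{}}. c i * g i \<sigma>)"
      by (intro range_eqI[of _ _ "\<lambda>_. a"]) (simp add: g_def fun_eq_iff)
  next
    fix f assume "f \<in> range (\<lambda>c \<sigma>. \<Sum>i\<in>{{}}. c i * g i \<sigma>)"
    then obtain c where "f = (\<lambda>\<sigma>. \<Sum>i\<in>{{}}. c i * g i \<sigma>)" by blast
    then show "f \<in> im_BdT K d"
      using 0 unfolding im_BdT_def g_def by (auto intro!: exI[of _ "c {}"])
  qed
  then show ?thesis using that[of "{{}}" g] 0 by (auto simp: g_def)
next
  case (Suc d')
  define g where "g = (\<lambda>\<rho> \<sigma>. if \<sigma> \<in> faces K d then inc_sign \<rho> \<sigma> else 0)"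
  have cob: "coboundary K d' z = (\<lambda>\<sigma>. \<Sum>i\<in>faces K d'. z i * g i \<sigma>)" for z
    unfolding coboundary_def g_def using Suc by (auto simp: mult.commute)
  have "im_BdT K d = range (\<lambda>c. coboundary K d' c)"
  proof (intro set_eqI iffI)
    fix f assume "f \<in> im_BdT K d"
    then show "f \<in> range (\<lambda>c. coboundary K d' c)" using Suc unfolding im_BdT_def by auto
  next
    fix f assume "f \<in> range (\<lambda>c. coboundary K d' c)"
    then obtain c where f: "f = coboundary K d' c" by blast
    \<comment> \<open>coboundary only reads a cochain on faces K d', so restricting c there changes nothing\<close>
    define c' where "c' = (\<lambda>\<rho>. if \<rho> \<in> faces K d' then c \<rho> else 0)"
    have "c' \<in> cochains K d'" unfolding c'_def cochains_def by auto
    moreover have "f = coboundary K d' c'" unfolding f cob c'_def by (intro ext sum.cong) auto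
    ultimately show "f \<in> im_BdT K d" using Suc unfolding im_BdT_def by auto
  qed
  then show ?thesis using that[of "faces K d'" g] by (simp add: cob g_def finite_faces)
qed

lemma zero_in_im_BdT: "(\<lambda>_. 0) \<in> im_BdT K d"
proof (rule im_BdT_finite_span[of d])
  fix I :: "'v set set" and g assume im: "im_BdT K d = range (\<lambda>c \<sigma>. \<Sum>i\<in>I. c i * g i \<sigma>)"
  show ?thesis unfolding im by (rule range_eqI[of _ _ "\<lambda>_. 0"]) simp
qed

lemma add_in_im_BdT:
  assumes "y \<in> im_BdT K d" "z \<in> im_BdT K d"
  shows "(\<lambda>t. y t + z t) \<in> im_BdT K d"
proof (rule im_BdT_finite_span[of d])
  fix I :: "'v set set" and g assume im: "im_BdT K d = range (\<lambda>c \<sigma>. \<Sum>i\<in>I. c i * g i \<sigma>)"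
  obtain a b where "y = (\<lambda>\<sigma>. \<Sum>i\<in>I. a i * g i \<sigma>)" "z = (\<lambda>\<sigma>. \<Sum>i\<in>I. b i * g i \<sigma>)"
    using assms unfolding im by blast
  then show ?thesis unfolding im
    by (intro range_eqI[of _ _ "\<lambda>i. a i + b i"]) (simp add: sum.distrib algebra_simps)
qed

lemma uminus_in_im_BdT:
  assumes "y \<in> im_BdT K d"
  shows "(\<lambda>t. - y t) \<in> im_BdT K d"
proof (rule im_BdT_finite_span[of d])
  fix I :: "'v set set" and g assume im: "im_BdT K d = range (\<lambda>c \<sigma>. \<Sum>i\<in>I. c i * g i \<sigma>)"
  obtain a where "y = (\<lambda>\<sigma>. \<Sum>i\<in>I. a i * g i \<sigma>)" using assms unfolding im by blast
  then show ?thesis unfolding im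
    by (intro range_eqI[of _ _ "\<lambda>i. - a i"]) (simp add: sum_negf)
qed

lemma im_BdT_subset_cochains: "im_BdT K d \<subseteq> cochains K d"
  by (rule im_BdT_finite_span[of d]) (auto simp: cochains_def)

lemma exists_orth_im_translate: "\<exists>y\<in>im_BdT K d. orth_im K d (\<lambda>t. x t + y t)"
proof (rule im_BdT_finite_span[of d])
  fix I :: "'v set set" and g
  assume "finite I" and im: "im_BdT K d = range (\<lambda>c \<sigma>. \<Sum>i\<in>I. c i * g i \<sigma>)"
  obtain c where c: "\<forall>j\<in>I. (\<Sum>t\<in>faces K d. (x t + (\<Sum>i\<in>I. c i * g i t)) * g j t) = 0"
    using orthogonal_combination_exists[OF \<open>finite I\<close> finite_faces] by blast
  define y where "y = (\<lambda>t. \<Sum>i\<in>I. c i * g i t)"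
  have orth: "(\<Sum>\<tau>\<in>faces K d. (x \<tau> + y \<tau>) * (\<Sum>i\<in>I. a i * g i \<tau>)) = 0" for a
  proof -
    have "(\<Sum>\<tau>\<in>faces K d. (x \<tau> + y \<tau>) * (\<Sum>i\<in>I. a i * g i \<tau>))
        = (\<Sum>\<tau>\<in>faces K d. \<Sum>i\<in>I. a i * ((x \<tau> + y \<tau>) * g i \<tau>))"
      by (simp add: sum_distrib_left mult.left_commute)
    also have "\<dots> = (\<Sum>i\<in>I. \<Sum>\<tau>\<in>faces K d. a i * ((x \<tau> + y \<tau>) * g i \<tau>))"
      by (rule sum.swap)
    also have "\<dots> = (\<Sum>i\<in>I. a i * (\<Sum>\<tau>\<in>faces K d. (x \<tau> + y \<tau>) * g i \<tau>))"
      by (simp add: sum_distrib_left)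
    also have "\<dots> = 0" using c unfolding y_def by simp
    finally show ?thesis .
  qed
  have "y \<in> im_BdT K d" unfolding im y_def by (rule rangeI)
  moreover have "orth_im K d (\<lambda>t. x t + y t)" unfolding orth_im_def im using orth by auto
  ultimately show ?thesis by blast
qed

end

section \<open>Quotient norms and Rayleigh quotients\<close>

lemma pnorm_pow_nonneg: "0 \<le> pnorm_pow K k p u"
  unfolding pnorm_pow_def by (intro sum_nonneg) auto

lemma pnorm_deg_pow_nonneg: "0 \<le> pnorm_deg_pow K d p u"
  unfolding pnorm_deg_pow_def by (intro sum_nonneg mult_nonneg_nonneg) auto

lemma quot_norm_pow_le: "y \<in> im_BdT K d \<Longrightarrow> quot_norm_pow K d p x \<le> pnorm_deg_pow K d p (\<lambda>\<tau>. x \<tau> + y \<tau>)"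
  unfolding quot_norm_pow_def by (rule cInf_lower) (auto intro!: bdd_belowI[of _ 0] pnorm_deg_pow_nonneg)

definition rayleigh :: "'v::linorder set set \<Rightarrow> nat \<Rightarrow> real \<Rightarrow> ('v set \<Rightarrow> real) \<Rightarrow> real" where
  "rayleigh K d p x = pnorm_pow K (d + 1) p (coboundary K d x) / quot_norm_pow K d p x"

definition cochains_outside_im :: "'v::linorder set set \<Rightarrow> nat \<Rightarrow> ('v set \<Rightarrow> real) set" where
  "cochains_outside_im K d = {x \<in> cochains K d. x \<notin> im_BdT K d}"

definition cochains_orth_im :: "'v::linorder set set \<Rightarrow> nat \<Rightarrow> ('v set \<Rightarrow> real) set" where
  "cochains_orth_im K d = {x \<in> cochains K d. (\<exists>\<tau>\<in>faces K d. x \<tau> \<noteq> 0) \<and> orth_im K d x}"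

lemma lambda_up_eq_Inf_rayleigh: "lambda_up K d p = Inf (rayleigh K d p ` cochains_orth_im K d)"
  unfolding lambda_up_def rayleigh_def cochains_orth_im_def by (rule arg_cong[where f = Inf]) auto

lemma cheeger_eq_Inf_rayleigh: "cheeger K d = Inf (rayleigh K d 1 ` cochains_outside_im K d)"
  unfolding cheeger_def rayleigh_def cochains_outside_im_def by (rule arg_cong[where f = Inf]) auto

context
  fixes K :: "'v::linorder set set"
  assumes sc: "simplicial_complex K"
begin

lemma le_quot_norm_pow:
  assumes "\<And>y. y \<in> im_BdT K d \<Longrightarrow> L \<le> pnorm_deg_pow K d p (\<lambda>\<tau>. x \<tau> + y \<tau>)"
  shows "L \<le> quot_norm_pow K d p x"
  unfolding quot_norm_pow_def using assms zero_in_im_BdT[OF sc] by (intro cInf_greatest) auto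

lemma quot_norm_pow_nonneg: "0 \<le> quot_norm_pow K d p x"
  by (rule le_quot_norm_pow) (rule pnorm_deg_pow_nonneg)

lemma quot_norm_pow_add_im:
  assumes y0: "y0 \<in> im_BdT K d"
  shows "quot_norm_pow K d p (\<lambda>t. x t + y0 t) = quot_norm_pow K d p x"
proof -
  have shift: "(\<lambda>y \<tau>. y0 \<tau> + y \<tau>) ` im_BdT K d = im_BdT K d"
  proof (intro equalityI image_subsetI subsetI)
    fix y assume y: "y \<in> im_BdT K d"
    then show "(\<lambda>\<tau>. y0 \<tau> + y \<tau>) \<in> im_BdT K d" using add_in_im_BdT[OF sc y0] by blast
    have "(\<lambda>\<tau>. y \<tau> + - y0 \<tau>) \<in> im_BdT K d"
      using add_in_im_BdT[OF sc y uminus_in_im_BdT[OF sc y0]] .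
    then show "y \<in> (\<lambda>y \<tau>. y0 \<tau> + y \<tau>) ` im_BdT K d" by (rule rev_image_eqI) simp
  qed
  have "quot_norm_pow K d p x
      = Inf ((\<lambda>y. pnorm_deg_pow K d p (\<lambda>\<tau>. x \<tau> + y \<tau>)) ` ((\<lambda>y \<tau>. y0 \<tau> + y \<tau>) ` im_BdT K d))"
    unfolding shift quot_norm_pow_def Setcompr_eq_image ..
  also have "\<dots> = quot_norm_pow K d p (\<lambda>t. x t + y0 t)"
    unfolding quot_norm_pow_def Setcompr_eq_image image_image by (simp add: add.assoc)
  finally show ?thesis ..
qed

lemma pnorm_pow_coboundary_le: "pnorm_pow K (d + 1) 1 (coboundary K d z) \<le> pnorm_deg_pow K d 1 z"
proof -
  \<comment> \<open>Every entry of B_{d+1} has modulus at most 1, and column \<tau> has deg \<tau> nonzero entries.\<close>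
  have "pnorm_pow K (d + 1) 1 (coboundary K d z)
      \<le> (\<Sum>\<sigma>\<in>faces K (d + 1). \<Sum>\<tau>\<in>faces K d. if \<tau> \<subseteq> \<sigma> then \<bar>z \<tau>\<bar> else 0)"
    unfolding pnorm_pow_def
  proof (intro sum_mono)
    fix \<sigma> assume "\<sigma> \<in> faces K (d + 1)"
    then have "\<bar>coboundary K d z \<sigma>\<bar> \<le> (\<Sum>\<tau>\<in>faces K d. \<bar>inc_sign \<tau> \<sigma> * z \<tau>\<bar>)"
      unfolding coboundary_def by (simp add: sum_abs)
    also have "\<dots> \<le> (\<Sum>\<tau>\<in>faces K d. if \<tau> \<subseteq> \<sigma> then \<bar>z \<tau>\<bar> else 0)"
      by (intro sum_mono) (simp add: inc_sign_def abs_mult power_abs)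
    finally show "\<bar>coboundary K d z \<sigma>\<bar> powr 1 \<le> (\<Sum>\<tau>\<in>faces K d. if \<tau> \<subseteq> \<sigma> then \<bar>z \<tau>\<bar> else 0)"
      by simp
  qed
  also have "\<dots> = (\<Sum>\<tau>\<in>faces K d. \<Sum>\<sigma>\<in>faces K (d + 1). if \<tau> \<subseteq> \<sigma> then \<bar>z \<tau>\<bar> else 0)"
    by (rule sum.swap)
  also have "\<dots> = pnorm_deg_pow K d 1 z"
    unfolding pnorm_deg_pow_def deg_def
    by (simp add: sum.inter_filter[symmetric] finite_faces[OF sc])
  finally show ?thesis .
qed

lemma pnorm_pow_le_powr_pnorm_pow_1:
  assumes "p \<ge> 1"
  shows "pnorm_pow K k p u \<le> pnorm_pow K k 1 u powr p"
  using sum_powr_le_powr_sum[where A = "faces K k" and w = "\<lambda>_. 1" and a = "\<lambda>\<sigma>. \<bar>u \<sigma>\<bar>"]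
    assms finite_faces[OF sc] unfolding pnorm_pow_def by simp

lemma powr_pnorm_pow_1_le:
  assumes "p \<ge> 1" "faces K k \<noteq> {}"
  shows "pnorm_pow K k 1 u powr p \<le> real (card (faces K k)) powr (p - 1) * pnorm_pow K k p u"
  using powr_sum_le_sum_powr[where A = "faces K k" and w = "\<lambda>_. 1" and a = "\<lambda>\<sigma>. \<bar>u \<sigma>\<bar>"]
    assms finite_faces[OF sc] unfolding pnorm_pow_def by (simp add: card_gt_0_iff)

lemma quot_norm_pow_le_powr_quot_norm_pow_1:
  assumes p: "p \<ge> 1" and deg: "\<forall>\<tau>\<in>faces K d. deg K d \<tau> > 0"
  shows "quot_norm_pow K d p x \<le> quot_norm_pow K d 1 x powr p"
proof -
  let ?Q = "quot_norm_pow K d p x"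
  \<comment> \<open>Compare the p-th roots, since the infimum commutes with the monotone map t \<mapsto> t powr (1/p).\<close>
  have "?Q powr (1 / p) \<le> quot_norm_pow K d 1 x"
  proof (rule le_quot_norm_pow)
    fix y assume "y \<in> im_BdT K d"
    let ?N = "pnorm_deg_pow K d 1 (\<lambda>\<tau>. x \<tau> + y \<tau>)"
    have "?Q \<le> pnorm_deg_pow K d p (\<lambda>\<tau>. x \<tau> + y \<tau>)" using quot_norm_pow_le[OF \<open>y \<in> _\<close>] .
    also have "\<dots> \<le> ?N powr p"
      unfolding pnorm_deg_pow_def using p deg finite_faces[OF sc]
      by (simp add: sum_powr_le_powr_sum Suc_leI)
    finally have "?Q powr (1 / p) \<le> (?N powr p) powr (1 / p)"
      using quot_norm_pow_nonneg p by (intro powr_mono2) auto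
    also have "\<dots> = ?N" using p pnorm_deg_pow_nonneg[of K d 1] by (simp add: powr_powr)
    finally show "?Q powr (1 / p) \<le> ?N" .
  qed
  then have "(?Q powr (1 / p)) powr p \<le> quot_norm_pow K d 1 x powr p"
    using p by (intro powr_mono2) auto
  then show ?thesis using p quot_norm_pow_nonneg by (simp add: powr_powr)
qed

lemma powr_quot_norm_pow_1_le:
  assumes p: "p \<ge> 1" and vol: "vol K d > 0"
  shows "quot_norm_pow K d 1 x powr p \<le> vol K d powr (p - 1) * quot_norm_pow K d p x"
proof -
  have "quot_norm_pow K d 1 x powr p / vol K d powr (p - 1) \<le> quot_norm_pow K d p x"
  proof (rule le_quot_norm_pow)
    fix y assume "y \<in> im_BdT K d"
    let ?N = "pnorm_deg_pow K d 1 (\<lambda>\<tau>. x \<tau> + y \<tau>)"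
    have "quot_norm_pow K d 1 x powr p \<le> ?N powr p"
      using quot_norm_pow_le[OF \<open>y \<in> _\<close>] quot_norm_pow_nonneg p by (intro powr_mono2) auto
    also have "\<dots> \<le> vol K d powr (p - 1) * pnorm_deg_pow K d p (\<lambda>\<tau>. x \<tau> + y \<tau>)"
      unfolding pnorm_deg_pow_def using p vol finite_faces[OF sc] unfolding vol_def
      by (simp add: powr_sum_le_sum_powr)
    finally show "quot_norm_pow K d 1 x powr p / vol K d powr (p - 1)
        \<le> pnorm_deg_pow K d p (\<lambda>\<tau>. x \<tau> + y \<tau>)"
      using vol by (simp add: divide_le_eq mult.commute)
  qed
  then show ?thesis using vol by (simp add: divide_le_eq mult.commute)
qed

lemma cochains_orth_im_subset: "cochains_orth_im K d \<subseteq> cochains_outside_im K d"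
proof
  fix x assume x: "x \<in> cochains_orth_im K d"
  have "x \<notin> im_BdT K d"
  proof
    assume "x \<in> im_BdT K d"
    then have "(\<Sum>\<tau>\<in>faces K d. x \<tau> * x \<tau>) = 0"
      using x unfolding cochains_orth_im_def orth_im_def by blast
    then show False
      using x finite_faces[OF sc] unfolding cochains_orth_im_def by (simp add: sum_nonneg_eq_0_iff)
  qed
  then show "x \<in> cochains_outside_im K d"
    using x unfolding cochains_orth_im_def cochains_outside_im_def by blast
qed

lemma vol_pos:
  assumes "faces K d \<noteq> {}" "\<forall>\<tau>\<in>faces K d. deg K d \<tau> > 0"
  shows "vol K d > 0"
  unfolding vol_def using assms finite_faces[OF sc] by (intro sum_pos) auto

lemma rayleigh_nonneg: "0 \<le> rayleigh K d p x"
  unfolding rayleigh_def by (simp add: divide_nonneg_nonneg pnorm_pow_nonneg quot_norm_pow_nonneg)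

lemma rayleigh_add_im:
  assumes "y \<in> im_BdT K d"
  shows "rayleigh K d p (\<lambda>t. x t + y t) = rayleigh K d p x"
  unfolding rayleigh_def coboundary_add_im_BdT[OF sc assms] quot_norm_pow_add_im[OF assms] ..

lemma exists_orth_im_rayleigh_eq:
  assumes x: "x \<in> cochains_outside_im K d"
  obtains x' where "x' \<in> cochains_orth_im K d" "\<And>q. rayleigh K d q x' = rayleigh K d q x"
proof -
  obtain y where y: "y \<in> im_BdT K d" "orth_im K d (\<lambda>t. x t + y t)"
    using exists_orth_im_translate[OF sc] by blast
  have x0: "x t = 0" and y0: "y t = 0" if "t \<notin> faces K d" for t
    using x im_BdT_subset_cochains[OF sc] y(1) that
    unfolding cochains_outside_im_def cochains_def by auto
  then have "(\<lambda>t. x t + y t) \<in> cochains K d" unfolding cochains_def by simp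
  moreover have "\<exists>\<tau>\<in>faces K d. x \<tau> + y \<tau> \<noteq> 0"
  proof (rule ccontr)
    assume "\<not> (\<exists>\<tau>\<in>faces K d. x \<tau> + y \<tau> \<noteq> 0)"
    then have "x = (\<lambda>t. - y t)"
      using x0 y0 by (auto simp: fun_eq_iff eq_neg_iff_add_eq_0)
    then show False using x uminus_in_im_BdT[OF sc y(1)] unfolding cochains_outside_im_def by simp
  qed
  ultimately have "(\<lambda>t. x t + y t) \<in> cochains_orth_im K d"
    using y(2) unfolding cochains_orth_im_def by blast
  then show ?thesis using that rayleigh_add_im[OF y(1)] by blast
qed

lemma cochains_outside_im_nonempty:
  assumes "faces K d \<noteq> {}" "\<forall>\<tau>\<in>faces K d. deg K d \<tau> > 0"
  shows "cochains_outside_im K d \<noteq> {}"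
proof -
  obtain \<tau> where \<tau>: "\<tau> \<in> faces K d" using assms(1) by blast
  then obtain \<sigma> where \<sigma>: "\<sigma> \<in> faces K (d + 1)" "\<tau> \<subseteq> \<sigma>"
    using assms(2) exists_coface_if_deg_pos by blast
  define e where "e = (\<lambda>t. if t = \<tau> then 1 else (0::real))"
  \<comment> \<open>The coboundary of the indicator of \<tau> is nonzero at \<sigma>, whereas B_{d+1}^T kills Im(B_d^T).\<close>
  have "coboundary K d e \<sigma> = inc_sign \<tau> \<sigma>"
    unfolding coboundary_def e_def using \<sigma>(1) \<tau> finite_faces[OF sc]
    by (simp add: if_distrib sum.delta' cong: if_cong)
  also have "\<dots> \<noteq> 0"
    using \<sigma> \<tau> unfolding inc_sign_def faces_def by simp
  finally have "e \<notin> im_BdT K d" using coboundary_im_BdT_eq_0[OF sc] by blast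
  moreover have "e \<in> cochains K d" unfolding e_def cochains_def using \<tau> by auto
  ultimately show ?thesis unfolding cochains_outside_im_def by blast
qed

lemma pnorm_pow_coboundary_le_quot_norm_pow:
  "pnorm_pow K (d + 1) 1 (coboundary K d x) \<le> quot_norm_pow K d 1 x"
proof (rule le_quot_norm_pow)
  fix y assume "y \<in> im_BdT K d"
  then have "pnorm_pow K (d + 1) 1 (coboundary K d x)
      = pnorm_pow K (d + 1) 1 (coboundary K d (\<lambda>t. x t + y t))"
    by (simp add: coboundary_add_im_BdT[OF sc])
  also have "\<dots> \<le> pnorm_deg_pow K d 1 (\<lambda>\<tau>. x \<tau> + y \<tau>)"
    by (rule pnorm_pow_coboundary_le)
  finally show "pnorm_pow K (d + 1) 1 (coboundary K d x) \<le> pnorm_deg_pow K d 1 (\<lambda>\<tau>. x \<tau> + y \<tau>)" .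
qed

end

section \<open>The two bounds\<close>

context
  fixes K :: "'v::linorder set set" and d :: nat and p :: real
  assumes sc: "simplicial_complex K" and p: "p \<ge> 1"
    and nonempty: "faces K d \<noteq> {}" and deg_pos: "\<forall>\<tau>\<in>faces K d. deg K d \<tau> > 0"
begin

lemma powr_rayleigh_1_le_rayleigh:
  "rayleigh K d 1 x powr p / real (card (faces K (d + 1))) powr (p - 1) \<le> rayleigh K d p x"
proof -
  let ?a = "pnorm_pow K (d + 1) 1 (coboundary K d x)" and ?q = "quot_norm_pow K d 1 x"
  let ?ap = "pnorm_pow K (d + 1) p (coboundary K d x)" and ?qp = "quot_norm_pow K d p x"
  let ?N = "real (card (faces K (d + 1)))"
  have "?N > 0"
    using faces_Suc_nonempty[OF nonempty deg_pos] finite_faces[OF sc] by (simp add: card_gt_0_iff)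
  show ?thesis
  proof (cases "?q = 0")
    case True
    then show ?thesis using rayleigh_nonneg[OF sc] by (simp add: rayleigh_def)
  next
    case False
    then have "?q > 0" using quot_norm_pow_nonneg[OF sc] by (simp add: order_le_neq_trans)
    have "?qp > 0"
      using powr_quot_norm_pow_1_le[OF sc p vol_pos[OF sc nonempty deg_pos], of x] \<open>?q > 0\<close>
        quot_norm_pow_nonneg[OF sc, of d p x] by (auto simp: zero_less_mult_iff order_le_less)
    have "rayleigh K d 1 x powr p / ?N powr (p - 1) = ?a powr p / ?N powr (p - 1) / ?q powr p"
      unfolding rayleigh_def using pnorm_pow_nonneg[of K "d + 1" 1] quot_norm_pow_nonneg[OF sc]
      by (simp add: powr_divide)
    also have "\<dots> \<le> ?ap / ?q powr p"
      using powr_pnorm_pow_1_le[OF sc p faces_Suc_nonempty[OF nonempty deg_pos]] \<open>?N > 0\<close>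
      by (intro divide_right_mono) (auto simp: divide_le_eq mult.commute)
    also have "\<dots> \<le> ?ap / ?qp"
      using quot_norm_pow_le_powr_quot_norm_pow_1[OF sc p deg_pos] \<open>?qp > 0\<close> \<open>?q > 0\<close>
        pnorm_pow_nonneg
      by (intro divide_left_mono) (auto intro: mult_pos_pos)
    finally show ?thesis unfolding rayleigh_def .
  qed
qed

lemma rayleigh_le_vol_rayleigh_1: "rayleigh K d p x \<le> vol K d powr (p - 1) * rayleigh K d 1 x"
proof -
  let ?a = "pnorm_pow K (d + 1) 1 (coboundary K d x)" and ?q = "quot_norm_pow K d 1 x"
  let ?ap = "pnorm_pow K (d + 1) p (coboundary K d x)" and ?qp = "quot_norm_pow K d p x"
  let ?W = "vol K d powr (p - 1)"
  have "?W > 0" using vol_pos[OF sc nonempty deg_pos] by simp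
  show ?thesis
  proof (cases "?q = 0")
    case True
    then have "?qp = 0"
      using quot_norm_pow_le_powr_quot_norm_pow_1[OF sc p deg_pos, of x] quot_norm_pow_nonneg[OF sc]
      by (simp add: order_antisym)
    then show ?thesis using True by (simp add: rayleigh_def)
  next
    case False
    then have "?q > 0" using quot_norm_pow_nonneg[OF sc] by (simp add: order_le_neq_trans)
    \<comment> \<open>rayleigh K d 1 x \<le> 1, so raising it to the power p can only decrease it.\<close>
    have "0 \<le> ?a / ?q" "?a / ?q \<le> 1"
      using pnorm_pow_coboundary_le_quot_norm_pow[OF sc] pnorm_pow_nonneg[of K "d + 1" 1] \<open>?q > 0\<close>
      by auto
    then have powr_le: "(?a / ?q) powr p \<le> ?a / ?q" using p by (rule powr_le_self)
    have "?q powr p / ?W \<le> ?qp"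
      using powr_quot_norm_pow_1_le[OF sc p vol_pos[OF sc nonempty deg_pos], of x] \<open>?W > 0\<close>
      by (simp add: divide_le_eq mult.commute)
    then have "?ap / ?qp \<le> ?a powr p / (?q powr p / ?W)"
      using pnorm_pow_le_powr_pnorm_pow_1[OF sc p] pnorm_pow_nonneg \<open>?q > 0\<close> \<open>?W > 0\<close>
      by (intro frac_le) auto
    also have "\<dots> = ?W * (?a / ?q) powr p"
      using \<open>?q > 0\<close> pnorm_pow_nonneg[of K "d + 1" 1] by (simp add: powr_divide)
    also have "\<dots> \<le> ?W * (?a / ?q)"
      using powr_le \<open>?W > 0\<close> by (simp only: mult_le_cancel_left_pos)
    finally show ?thesis unfolding rayleigh_def .
  qed
qed

lemma cheeger_nonneg: "0 \<le> cheeger K d"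
  unfolding cheeger_eq_Inf_rayleigh using cochains_outside_im_nonempty[OF sc nonempty deg_pos]
  by (intro cInf_greatest) (auto simp: rayleigh_nonneg[OF sc])

lemma cheeger_powr_le_lambda_up:
  "cheeger K d powr p / real (card (faces K (d + 1))) powr (p - 1) \<le> lambda_up K d p"
  unfolding lambda_up_eq_Inf_rayleigh
proof (rule cInf_greatest)
  obtain x where "x \<in> cochains_outside_im K d"
    using cochains_outside_im_nonempty[OF sc nonempty deg_pos] by blast
  then obtain x' where "x' \<in> cochains_orth_im K d" by (rule exists_orth_im_rayleigh_eq[OF sc])
  then show "rayleigh K d p ` cochains_orth_im K d \<noteq> {}" by blast
next
  fix r assume "r \<in> rayleigh K d p ` cochains_orth_im K d"
  then obtain x where x: "x \<in> cochains_orth_im K d" and r: "r = rayleigh K d p x" by blast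
  have "cheeger K d \<le> rayleigh K d 1 x"
    unfolding cheeger_eq_Inf_rayleigh using x cochains_orth_im_subset[OF sc] rayleigh_nonneg[OF sc]
    by (intro cInf_lower bdd_belowI2[of _ 0]) auto
  then have "cheeger K d powr p / real (card (faces K (d + 1))) powr (p - 1)
      \<le> rayleigh K d 1 x powr p / real (card (faces K (d + 1))) powr (p - 1)"
    using cheeger_nonneg p by (intro divide_right_mono powr_mono2) auto
  also have "\<dots> \<le> r" unfolding r by (rule powr_rayleigh_1_le_rayleigh)
  finally show "cheeger K d powr p / real (card (faces K (d + 1))) powr (p - 1) \<le> r" .
qed

lemma lambda_up_le_vol_cheeger: "lambda_up K d p \<le> vol K d powr (p - 1) * cheeger K d"
proof -
  have "vol K d powr (p - 1) > 0" using vol_pos[OF sc nonempty deg_pos] by simp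
  have "lambda_up K d p / vol K d powr (p - 1) \<le> cheeger K d"
    unfolding cheeger_eq_Inf_rayleigh
  proof (rule cInf_greatest)
    show "rayleigh K d 1 ` cochains_outside_im K d \<noteq> {}"
      using cochains_outside_im_nonempty[OF sc nonempty deg_pos] by blast
  next
    fix r assume "r \<in> rayleigh K d 1 ` cochains_outside_im K d"
    then obtain x where x: "x \<in> cochains_outside_im K d" and r: "r = rayleigh K d 1 x" by blast
    obtain x' where x': "x' \<in> cochains_orth_im K d" and same: "\<And>q. rayleigh K d q x' = rayleigh K d q x"
      using exists_orth_im_rayleigh_eq[OF sc x] by metis
    have "lambda_up K d p \<le> rayleigh K d p x'"
      unfolding lambda_up_eq_Inf_rayleigh using x' rayleigh_nonneg[OF sc]
      by (intro cInf_lower bdd_belowI2[of _ 0]) auto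
    also have "\<dots> \<le> vol K d powr (p - 1) * r"
      unfolding same r by (rule rayleigh_le_vol_rayleigh_1)
    finally show "lambda_up K d p / vol K d powr (p - 1) \<le> r"
      using \<open>vol K d powr (p - 1) > 0\<close> by (simp add: divide_le_eq mult.commute)
  qed
  then show ?thesis using \<open>vol K d powr (p - 1) > 0\<close> by (simp add: divide_le_eq mult.commute)
qed

end

theorem proposition3p2:
  fixes K :: "'v::linorder set set" and d :: nat and p :: real
  assumes "simplicial_complex K"
    and "faces K d \<noteq> {}"
    and "\<forall>\<tau>\<in>faces K d. deg K d \<tau> > 0"
    and "p \<ge> 1"
  shows "cheeger K d powr p / real (card (faces K (d+1))) powr (p - 1) \<le> lambda_up K d p
         \<and> lambda_up K d p \<le> vol K d powr (p - 1) * cheeger K d"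
  using cheeger_powr_le_lambda_up[OF assms(1,4,2,3)] lambda_up_le_vol_cheeger[OF assms(1,4,2,3)]
  by simp

end
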